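(* Let $\gamma_{\mathrm f} > 1$. Then the inequality \[ \prod_{i=1,2} \frac{1}{N_i} \frac{|\sin(N_i \bar{z}_i / 2)|}{|\sin(\bar{z}_i / 2)|} \geq \frac{1}{\sqrt{\gamma_{\mathrm f}}} \] holds whenever $\bar{z}_i\in\left[-\frac{2}{N_i} \alpha^{*}, \frac{2}{N_i} \alpha^{*}\right]$ for both $i = 1,2$. Here, $\alpha^{*}$ is the unique root of the equation \[ \frac{\sin(\alpha)}{\alpha} = \frac{1}{\sqrt[4]{\gamma_{\mathrm f}}} \] within the range $[0, \pi]$.
   Context: Consider an $N_1 \times N_2$ uniform rectangular antenna array (URA) with horizontal and vertical inter-element spacings $d_1, d_2$ and wavelength $\lambda$. A steering vector is aimed at direction $(\theta_x,\theta_y)$ (angles measured relative to the x- and y-axes), while the incident ray arrives from $(\theta_x+\Delta_x,\theta_y+\Delta_y)$. The resulting phase deviations are $\bar{z}_1 = \frac{2\pi}{\lambda}d_1[\sin(\theta_x+\Delta_x) - \sin(\theta_x)]$ and $\bar{z}_2 = \frac{2\pi}{\lambda}d_2[\sin(\theta_y+\Delta_y) - \sin(\theta_y)]$, and the ratio of achievable to maximum array gain is $\left(\prod_{i=1}^2\frac{1}{N_i}\frac{\sin(N_i\bar{z}_i/2)}{\sin(\bar{z}_i/2)}\right)^2$. The degradation factor threshold is $\gamma_{\mathrm f} = 10^{\gamma/10}$, where $\gamma$ is the allowed gain loss in dB; the gain loss stays within $\gamma$ dB iff this ratio is at least $1/\gamma_{\mathrm f}$, i.e. iff the product in the claim is at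 least $1/\sqrt{\gamma_{\mathrm f}}$. $N_1,N_2$ are positive integers. *)

theory Defs
  imports Complex_Main
begin

text \<open>Normalized array factor (1/N) |sin(N z/2)| / |sin(z/2)|, extended by its
  limit value 1 at the removable singularities where sin(z/2) = 0.\<close>
definition norm_af :: "nat \<Rightarrow> real \<Rightarrow> real" where
  "norm_af N z = (if sin (z / 2) = 0 then 1
                  else (1 / real N) * (\<bar>sin (real N * z / 2)\<bar> / \<bar>sin (z / 2)\<bar>))"

end

theory Submission
  imports Defs
begin

text \<open>With \<open>x = z/2\<close> and \<open>t = N \<bar>x\<bar> \<le> \<alpha> \<le> pi\<close>, the bound \<open>\<bar>sin x\<bar> \<le> \<bar>x\<bar>\<close> gives
  \<open>norm_af N z \<ge> sin t / t\<close>, and since \<open>sin t / t\<close> decreases on \<open>(0, pi]\<close> each factor is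
  at least \<open>sin \<alpha> / \<alpha> = 1 / root 4 \<gamma>f\<close>, whose square is \<open>1 / sqrt \<gamma>f\<close>.\<close>

lemma mult_cos_le_sin:
  fixes u :: real
  assumes "0 \<le> u" "u \<le> pi"
  shows "u * cos u \<le> sin u"
proof -
  have "(\<lambda>x. x * cos x - sin x) u \<le> (\<lambda>x. x * cos x - sin x) 0"
  proof (rule deriv_nonpos_imp_antimono[of 0 u _ "\<lambda>x. - x * sin x"])
    fix x assume "x \<in> {0..u}"
    then show "- x * sin x \<le> 0"
      using assms sin_ge_zero[of x] by simp
    show "((\<lambda>x. x * cos x - sin x) has_real_derivative - x * sin x) (at x)"
      by (auto intro!: derivative_eq_intros)
  qed (use assms in auto)
  then show ?thesis by simp
qed

lemma sin_div_antimono: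
  fixes s t :: real
  assumes "0 < s" "s \<le> t" "t \<le> pi"
  shows "sin t / t \<le> sin s / s"
proof (rule deriv_nonpos_imp_antimono[of s t _ "\<lambda>x. (x * cos x - sin x) / x\<^sup>2"])
  fix x assume "x \<in> {s..t}"
  then have "0 < x" "x \<le> pi" using assms by auto
  then show "((\<lambda>x. sin x / x) has_real_derivative (x * cos x - sin x) / x\<^sup>2) (at x)"
    by (auto intro!: derivative_eq_intros simp: power2_eq_square algebra_simps)
  show "(x * cos x - sin x) / x\<^sup>2 \<le> 0"
    using mult_cos_le_sin[of x] \<open>0 < x\<close> \<open>x \<le> pi\<close> by (simp add: divide_nonpos_pos)
qed (use assms in auto)

lemma sin_div_le_one:
  fixes x :: real
  assumes "0 < x"
  shows "sin x / x \<le> 1"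
  using sin_x_le_x[of x] assms by simp

lemma norm_af_ge_sin_div:
  fixes N :: nat and z :: real
  defines "t \<equiv> real N * \<bar>z\<bar> / 2"
  assumes "N > 0" "z \<noteq> 0" "t \<le> pi"
  shows "sin t / t \<le> norm_af N z"
proof -
  have t_pos: "0 < t" using assms by (simp add: t_def)
  show ?thesis
  proof (cases "sin (z / 2) = 0")
    case True
    then show ?thesis using sin_div_le_one[OF t_pos] by (simp add: norm_af_def)
  next
    case False
    have sin_t: "\<bar>sin (real N * z / 2)\<bar> = sin t"
    proof -
      have "\<bar>sin (real N * z / 2)\<bar> = \<bar>sin t\<bar>"
        unfolding t_def by (cases "z \<ge> 0") auto
      then show ?thesis using sin_ge_zero[of t] t_pos assms(4) by simp
    qed
    have "sin t / t = sin t / (real N * \<bar>z / 2\<bar>)" by (simp add: t_def)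
    also have "\<dots> \<le> sin t / (real N * \<bar>sin (z / 2)\<bar>)"
      using abs_sin_x_le_abs_x[of "z / 2"] False sin_ge_zero[of t] t_pos assms(2,4)
      by (intro divide_left_mono mult_left_mono mult_pos_pos) auto
    also have "\<dots> = norm_af N z"
      using False sin_t by (simp add: norm_af_def)
    finally show ?thesis .
  qed
qed

lemma norm_af_ge_sin_div_bound:
  fixes N :: nat and z \<alpha> :: real
  assumes "N > 0" "0 < \<alpha>" "\<alpha> \<le> pi" "\<bar>z\<bar> \<le> 2 / real N * \<alpha>"
  shows "sin \<alpha> / \<alpha> \<le> norm_af N z"
proof (cases "z = 0")
  case True
  then show ?thesis using sin_div_le_one[OF assms(2)] by (simp add: norm_af_def)
next
  case False
  define t where "t = real N * \<bar>z\<bar> / 2"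
  have "0 < t" using False assms(1) by (simp add: t_def)
  moreover have "t \<le> \<alpha>" using assms(1,4) by (simp add: t_def field_simps)
  ultimately have "sin \<alpha> / \<alpha> \<le> sin t / t"
    using sin_div_antimono assms(3) by simp
  also have "\<dots> \<le> norm_af N z"
    using norm_af_ge_sin_div[of N z] False assms(1,3) \<open>t \<le> \<alpha>\<close> by (simp add: t_def)
  finally show ?thesis .
qed

lemma root4_mult_self:
  fixes x :: real
  assumes "0 \<le> x"
  shows "root 4 x * root 4 x = sqrt x"
proof -
  have "root 4 x = root 2 (root 2 x)"
    using real_root_mult_exp[of 2 2 x] by simp
  then show ?thesis using assms by (simp add: sqrt_def[symmetric])
qed

theorem lemma2:
  fixes N1 N2 :: nat and z1 z2 \<gamma>f \<alpha> :: real
  assumes "\<gamma>f > 1"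
    and "N1 > 0" and "N2 > 0"
    and "0 \<le> \<alpha>" and "\<alpha> \<le> pi"
    and "sin \<alpha> / \<alpha> = 1 / root 4 \<gamma>f"
    and "\<bar>z1\<bar> \<le> 2 / real N1 * \<alpha>"
    and "\<bar>z2\<bar> \<le> 2 / real N2 * \<alpha>"
  shows "norm_af N1 z1 * norm_af N2 z2 \<ge> 1 / sqrt \<gamma>f"
proof -
  define c where "c = 1 / root 4 \<gamma>f"
  have "c > 0" using assms(1) by (simp add: c_def)
  then have "\<alpha> \<noteq> 0" using assms(6) by (auto simp: c_def)
  then have "\<alpha> > 0" using assms(4) by simp
  have "c \<le> norm_af N1 z1" "c \<le> norm_af N2 z2"
    using norm_af_ge_sin_div_bound[of N1 \<alpha> z1] norm_af_ge_sin_div_bound[of N2 \<alpha> z2]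
      \<open>\<alpha> > 0\<close> assms(2,3,5-8) by (simp_all add: c_def)
  then have "c * c \<le> norm_af N1 z1 * norm_af N2 z2"
    using \<open>c > 0\<close> by (intro mult_mono) auto
  moreover have "c * c = 1 / sqrt \<gamma>f"
    using root4_mult_self[of \<gamma>f] assms(1) by (simp add: c_def)
  ultimately show ?thesis by simp
qed

end
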